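(* Let $\alpha>0$, let $W$ be a standard Brownian motion, and let $X$ solve $dX_t=-\alpha X_t\,dt+dW_t$, $X_0=0$. Let $X^*_t=\sup_{0\le s\le t}|X_s|$. There exists a function $\phi:\mathbb{R}_+\to\mathbb{R}_+$ satisfying $\phi(\delta)\to0$ as $\delta\to0$ such that for any $t\ge1$ and $\delta>0$, \[ \mathbb{P}\big(X^*_t<\delta\log^{1/2}t\big)\le \phi(\delta). \] *)

theory Defs
  imports "HOL-Probability.Probability"
begin

definition brownian_motion :: "'a measure \<Rightarrow> (real \<Rightarrow> 'a \<Rightarrow> real) \<Rightarrow> bool" where
  "brownian_motion M W \<longleftrightarrow>
     prob_space M \<and>
     (\<forall>\<omega>\<in>space M. W 0 \<omega> = 0) \<and>
     (\<forall>\<omega>\<in>space M. continuous_on {0..} (\<lambda>t. W t \<omega>)) \<and>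
     (\<forall>s t. 0 \<le> s \<and> s < t \<longrightarrow>
        distributed M lborel (\<lambda>\<omega>. W t \<omega> - W s \<omega>) (normal_density 0 (sqrt (t - s)))) \<and>
     (\<forall>ts :: real list. sorted ts \<and> (\<forall>t\<in>set ts. 0 \<le> t) \<longrightarrow>
        prob_space.indep_vars M (\<lambda>_. borel)
          (\<lambda>i \<omega>. W (ts ! Suc i) \<omega> - W (ts ! i) \<omega>) {..<length ts - 1})"

definition running_abs_max :: "(real \<Rightarrow> 'a \<Rightarrow> real) \<Rightarrow> real \<Rightarrow> 'a \<Rightarrow> real" where
  "running_abs_max X t \<omega> = (SUP s\<in>{0..t}. \<bar>X s \<omega>\<bar>)"

end

(* On the event X*_t < \<delta> sqrt (ln t) the equation X_t = - \<alpha> \<integral>X + W_t bounds every unit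
   increment W(k+1) - W(k), k < \<lfloor>t\<rfloor>, by a = (2 + \<alpha>) \<delta> sqrt (ln t).  These increments are
   independent standard Gaussians, each lying in [-a, a] with probability at most
   min a (1 - exp (- a\<^sup>2) / 9).  Write c = (2 + \<alpha>) \<delta>, the only interesting case being c \<le> 1/2.
   If ln t \<le> 1/c the first bound gives a \<le> sqrt c; otherwise t is so large that the product
   of the second bounds is at most exp (- sqrt t / 18) \<le> 36 c.  Hence
   \<phi> \<delta> = 36 sqrt ((2 + \<alpha>) \<delta>) works. *)

theory Submission
  imports Defs
begin

(* Bound for the standard Gaussian mass of [-a, a]: the density is at most 1/2, and the
   mass of (a, a + 1] is at least exp (- a\<^sup>2) / 9. *)

definition normal_ball_bound :: "real \<Rightarrow> real" where
  "normal_ball_bound a = min a (1 - exp (- a\<^sup>2) / 9)"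

lemma normal_ball_bound_nonneg: "0 \<le> a \<Longrightarrow> 0 \<le> normal_ball_bound a"
proof -
  assume "0 \<le> a"
  moreover have "exp (- a\<^sup>2) \<le> 1" by simp
  ultimately show ?thesis unfolding normal_ball_bound_def by linarith
qed

lemma normal_ball_bound_le_one: "normal_ball_bound a \<le> 1"
  unfolding normal_ball_bound_def using exp_gt_zero[of "- a\<^sup>2"] by linarith

lemma std_normal_density_le_half: "std_normal_density x \<le> 1/2"
proof -
  have "2 \<le> sqrt (2*pi)" using pi_gt3 by (simp add: real_le_rsqrt)
  hence "1 / sqrt (2*pi) \<le> 1/2" by (simp add: field_simps)
  moreover have "exp (- x\<^sup>2 / 2) \<le> 1" by simp
  ultimately show ?thesis unfolding std_normal_density_def
    using mult_mono[of "1 / sqrt (2*pi)" "1/2" "exp (- x\<^sup>2 / 2)" 1] by simp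
qed

lemma std_normal_density_ge:
  assumes "0 \<le> a" "a \<le> x" "x \<le> a + 1"
  shows "exp (- a\<^sup>2) / 9 \<le> std_normal_density x"
proof -
  have "sqrt (2*pi) \<le> 3" using pi_less_4 by (simp add: real_sqrt_le_iff real_le_lsqrt)
  hence c: "1/3 \<le> 1 / sqrt (2*pi)" by (simp add: field_simps)
  have "x\<^sup>2 \<le> (a+1)\<^sup>2" using assms by (simp add: power_mono)
  also have "\<dots> \<le> 2*a\<^sup>2 + 2" using zero_le_square[of "a-1"] by (simp add: power2_eq_square algebra_simps)
  finally have "exp (- a\<^sup>2 - 1) \<le> exp (- x\<^sup>2 / 2)" by simp
  moreover have "exp (- a\<^sup>2) / 3 \<le> exp (- a\<^sup>2) / exp 1"
    using exp_le by (intro divide_left_mono) auto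
  moreover have "exp (- a\<^sup>2 - 1) = exp (- a\<^sup>2) / exp 1" by (simp add: exp_diff)
  ultimately have "exp (- a\<^sup>2) / 3 \<le> exp (- x\<^sup>2 / 2)" by linarith
  then have "(1/3) * (exp (- a\<^sup>2) / 3) \<le> (1 / sqrt (2*pi)) * exp (- x\<^sup>2 / 2)"
    using c by (intro mult_mono) auto
  then show ?thesis unfolding std_normal_density_def by simp
qed

lemma prob_std_normal_abs_le:
  assumes "prob_space M" and Y: "distributed M lborel Y (normal_density 0 1)" and a: "0 \<le> a"
  shows "measure M {\<omega>\<in>space M. \<bar>Y \<omega>\<bar> \<le> a} \<le> normal_ball_bound a"
proof -
  interpret prob_space M by fact
  have ball_eq: "{\<omega>\<in>space M. \<bar>Y \<omega>\<bar> \<le> a} = Y -` {-a..a} \<inter> space M" by auto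
  have "emeasure M (Y -` {-a..a} \<inter> space M)
      = (\<integral>\<^sup>+x. ennreal (std_normal_density x) * indicator {-a..a} x \<partial>lborel)"
    by (rule distributed_emeasure[OF Y]) simp
  also have "\<dots> \<le> (\<integral>\<^sup>+x. ennreal (1/2) * indicator {-a..a} x \<partial>lborel)"
    using std_normal_density_le_half by (intro nn_integral_mono mult_right_mono ennreal_leI) auto
  also have "\<dots> = ennreal (1/2) * ennreal (a - - a)"
    using a by (subst nn_integral_cmult_indicator) auto
  also have "\<dots> = ennreal ((1/2) * (a - - a))" using a by (subst ennreal_mult) auto
  also have "\<dots> = ennreal a" by simp
  finally have ball_le: "prob (Y -` {-a..a} \<inter> space M) \<le> a"
    using a by (simp add: emeasure_eq_measure)
  have "ennreal (exp (- a\<^sup>2) / 9)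
      = (\<integral>\<^sup>+x. ennreal (exp (- a\<^sup>2) / 9) * indicator {a<..a+1} x \<partial>lborel)"
    by (simp add: nn_integral_cmult_indicator)
  also have "\<dots> \<le> (\<integral>\<^sup>+x. ennreal (std_normal_density x) * indicator {a<..a+1} x \<partial>lborel)"
    using a std_normal_density_ge[OF a]
    by (intro nn_integral_mono) (auto simp: indicator_def intro!: ennreal_leI)
  also have "\<dots> = emeasure M (Y -` {a<..a+1} \<inter> space M)"
    by (rule distributed_emeasure[OF Y, symmetric]) simp
  finally have strip_ge: "exp (- a\<^sup>2) / 9 \<le> prob (Y -` {a<..a+1} \<inter> space M)"
    by (simp add: emeasure_eq_measure)
  have "prob (Y -` {-a..a} \<inter> space M) + prob (Y -` {a<..a+1} \<inter> space M)
      = prob ((Y -` {-a..a} \<inter> space M) \<union> (Y -` {a<..a+1} \<inter> space M))"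
    using distributed_measurable[OF Y] by (intro finite_measure_Union[symmetric]) auto
  also have "\<dots> \<le> 1" by simp
  finally show ?thesis
    unfolding ball_eq normal_ball_bound_def using ball_le strip_ge by linarith
qed

lemma (in prob_space) prob_indep_vars_all_le_prod:
  assumes "indep_vars (\<lambda>_. borel) Z I" and "finite I"
    and "\<And>i. i \<in> I \<Longrightarrow> B i \<in> sets borel"
    and le: "\<And>i. i \<in> I \<Longrightarrow> prob {\<omega>\<in>space M. Z i \<omega> \<in> B i} \<le> q i"
  shows "prob {\<omega>\<in>space M. \<forall>i\<in>I. Z i \<omega> \<in> B i} \<le> (\<Prod>i\<in>I. q i)"
proof (cases "I = {}")
  case True
  then show ?thesis by simp
next
  case False
  have "{\<omega>\<in>space M. \<forall>i\<in>I. Z i \<omega> \<in> B i} = (\<Inter>i\<in>I. Z i -` B i \<inter> space M)"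
    using False by auto
  also have "prob \<dots> = (\<Prod>i\<in>I. prob (Z i -` B i \<inter> space M))"
    using False assms by (intro indep_varsD) auto
  also have "\<dots> \<le> (\<Prod>i\<in>I. q i)"
    using le by (intro prod_mono) (auto simp: Int_def conj_commute)
  finally show ?thesis .
qed

lemma brownian_motion_increment_distributed:
  assumes "brownian_motion M W" "0 \<le> s" "s < t"
  shows "distributed M lborel (\<lambda>\<omega>. W t \<omega> - W s \<omega>) (normal_density 0 (sqrt (t - s)))"
  using assms unfolding brownian_motion_def by blast

lemma brownian_motion_unit_increments_indep:
  assumes "brownian_motion M W"
  shows "prob_space.indep_vars M (\<lambda>_. borel) (\<lambda>k \<omega>. W (real k + 1) \<omega> - W (real k) \<omega>) {..<n}"
proof -
  define ts where "ts = map real [0..<Suc n]"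
  have "sorted ts" "\<forall>t\<in>set ts. 0 \<le> t"
    unfolding ts_def by (auto simp: sorted_map mono_def simp del: upt_Suc)
  then have "prob_space.indep_vars M (\<lambda>_. borel)
      (\<lambda>i \<omega>. W (ts ! Suc i) \<omega> - W (ts ! i) \<omega>) {..<length ts - 1}"
    using assms unfolding brownian_motion_def by blast
  moreover have "ts ! Suc k = real k + 1" "ts ! k = real k" if "k < n" for k
    using that unfolding ts_def by (simp_all add: nth_append del: upt_Suc)
  ultimately show ?thesis
    using assms unfolding brownian_motion_def
    by (auto simp: ts_def intro: prob_space.indep_vars_cong[THEN iffD1, rotated -1])
qed

lemma prob_brownian_unit_increments_le:
  assumes BM: "brownian_motion M W" and a: "0 \<le> a"
  shows "measure M {\<omega>\<in>space M. \<forall>k<n. \<bar>W (real k + 1) \<omega> - W (real k) \<omega>\<bar> \<le> a}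
           \<le> normal_ball_bound a ^ n"
proof -
  interpret prob_space M using BM unfolding brownian_motion_def by simp
  have unit: "distributed M lborel (\<lambda>\<omega>. W (real k + 1) \<omega> - W (real k) \<omega>) (normal_density 0 1)" for k
    using brownian_motion_increment_distributed[OF BM, of "real k" "real k + 1"] by simp
  have "prob {\<omega>\<in>space M. \<forall>k\<in>{..<n}. W (real k + 1) \<omega> - W (real k) \<omega> \<in> {-a..a}}
      \<le> (\<Prod>k\<in>{..<n}. normal_ball_bound a)"
  proof (rule prob_indep_vars_all_le_prod[OF brownian_motion_unit_increments_indep[OF BM]])
    fix k
    have "{\<omega>\<in>space M. W (real k + 1) \<omega> - W (real k) \<omega> \<in> {-a..a}}
        = {\<omega>\<in>space M. \<bar>W (real k + 1) \<omega> - W (real k) \<omega>\<bar> \<le> a}" by auto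
    then show "prob {\<omega>\<in>space M. W (real k + 1) \<omega> - W (real k) \<omega> \<in> {-a..a}} \<le> normal_ball_bound a"
      using prob_std_normal_abs_le[OF prob_space_axioms unit a] by simp
  qed auto
  moreover have "{\<omega>\<in>space M. \<forall>k\<in>{..<n}. W (real k + 1) \<omega> - W (real k) \<omega> \<in> {-a..a}}
      = {\<omega>\<in>space M. \<forall>k<n. \<bar>W (real k + 1) \<omega> - W (real k) \<omega>\<bar> \<le> a}" by (force simp: abs_le_iff)
  ultimately show ?thesis by simp
qed

lemma normal_ball_bound_power_le_exp:
  assumes "0 \<le> a"
  shows "normal_ball_bound a ^ n \<le> exp (- real n * exp (- a\<^sup>2) / 9)"
proof -
  have "normal_ball_bound a \<le> exp (- exp (- a\<^sup>2) / 9)"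
    using exp_ge_add_one_self[of "- exp (- a\<^sup>2) / 9"] unfolding normal_ball_bound_def by linarith
  then have "normal_ball_bound a ^ n \<le> exp (- exp (- a\<^sup>2) / 9) ^ n"
    using normal_ball_bound_nonneg[OF assms] by (intro power_mono)
  also have "\<dots> = exp (- real n * exp (- a\<^sup>2) / 9)"
    by (simp add: exp_of_nat_mult[symmetric])
  finally show ?thesis .
qed

lemma nat_floor_ge_half:
  fixes t :: real
  assumes "1 \<le> t"
  shows "t \<le> 2 * real (nat \<lfloor>t\<rfloor>)"
proof -
  have "1 \<le> \<lfloor>t\<rfloor>" "t < of_int \<lfloor>t\<rfloor> + 1" using assms by linarith+
  moreover from this have "real (nat \<lfloor>t\<rfloor>) = of_int \<lfloor>t\<rfloor>" by simp
  ultimately show ?thesis by linarith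
qed

lemma normal_ball_bound_power_floor_le_large_time:
  fixes c t :: real
  assumes c: "0 < c" "c \<le> 1/2" and t: "1 \<le> t" and large: "1 / c < ln t"
  shows "normal_ball_bound (c * sqrt (ln t)) ^ nat \<lfloor>t\<rfloor> \<le> 36 * c"
proof -
  define a where "a = c * sqrt (ln t)"
  define n where "n = nat \<lfloor>t\<rfloor>"
  have ln_t: "0 \<le> ln t" using t by simp
  have a: "0 \<le> a" unfolding a_def using c ln_t by simp
  have sqrt_t: "sqrt t = exp (ln t / 2)"
    using t by (simp add: powr_half_sqrt[symmetric] powr_def)
  have "a\<^sup>2 \<le> ln t / 2"
  proof -
    have "c\<^sup>2 \<le> 1/2" using c mult_mono[of c "1/2" c 1] by (simp add: power2_eq_square)
    then show ?thesis
      unfolding a_def using ln_t mult_right_mono[of "c\<^sup>2" "1/2" "ln t"] by (simp add: power_mult_distrib)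
  qed
  then have "exp (- (ln t / 2)) \<le> exp (- a\<^sup>2)" by simp
  then have "1 / sqrt t \<le> exp (- a\<^sup>2)" unfolding sqrt_t by (simp add: exp_minus inverse_eq_divide)
  then have "(t / 2) * (1 / sqrt t) \<le> real n * exp (- a\<^sup>2)"
    using nat_floor_ge_half[OF t] t unfolding n_def by (intro mult_mono) auto
  moreover have "(t / 2) * (1 / sqrt t) = sqrt t / 2"
    using real_div_sqrt[of t] t by simp
  ultimately have "sqrt t / 18 \<le> real n * exp (- a\<^sup>2) / 9" by simp
  then have "exp (- real n * exp (- a\<^sup>2) / 9) \<le> exp (- (sqrt t / 18))" by simp
  then have "normal_ball_bound a ^ n \<le> exp (- (sqrt t / 18))"
    using normal_ball_bound_power_le_exp[OF a, of n] by linarith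
  also have "\<dots> \<le> inverse (sqrt t / 18)"
  proof -
    have "sqrt t / 18 \<le> exp (sqrt t / 18)" using exp_ge_add_one_self[of "sqrt t / 18"] by linarith
    then show ?thesis unfolding exp_minus using t by (intro le_imp_inverse_le) auto
  qed
  also have "\<dots> \<le> 36 * c"
  proof -
    have "1 / c \<le> 1 + ln t" using large by simp
    also have "\<dots> \<le> 2 * sqrt t"
      unfolding sqrt_t using exp_ge_add_one_self[of "ln t / 2"] by linarith
    finally have "1 \<le> 2 * c * sqrt t" using c by (simp add: field_simps)
    then show ?thesis using t by (simp add: field_simps)
  qed
  finally show ?thesis unfolding a_def n_def .
qed

lemma normal_ball_bound_power_floor_le:
  fixes c t :: real
  assumes c: "0 < c" and t: "1 \<le> t"
  shows "normal_ball_bound (c * sqrt (ln t)) ^ nat \<lfloor>t\<rfloor> \<le> 36 * sqrt c"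
proof -
  define a where "a = c * sqrt (ln t)"
  have a: "0 \<le> a" unfolding a_def using c t by simp
  consider "ln t \<le> 1 / c" | "c \<le> 1/2" "1 / c < ln t" | "1/2 < c" by linarith
  then show ?thesis
  proof cases
    case 1
    have "1 \<le> nat \<lfloor>t\<rfloor>" using t by linarith
    then have "normal_ball_bound a ^ nat \<lfloor>t\<rfloor> \<le> normal_ball_bound a ^ 1"
      using normal_ball_bound_nonneg[OF a] normal_ball_bound_le_one by (intro power_decreasing)
    also have "\<dots> \<le> a" by (simp add: normal_ball_bound_def)
    also have "\<dots> \<le> sqrt c"
    proof (rule real_le_rsqrt)
      have "c * ln t \<le> 1" using 1 c by (simp add: field_simps)
      moreover have "a\<^sup>2 = c\<^sup>2 * ln t" unfolding a_def using t by (simp add: power_mult_distrib)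
      ultimately show "a\<^sup>2 \<le> c"
        using c mult_left_mono[of "c * ln t" 1 c] by (simp add: power2_eq_square mult.assoc)
    qed
    finally show ?thesis using real_sqrt_ge_zero[of c] c unfolding a_def by linarith
  next
    case 2
    have "c * c \<le> c * 1" using c 2 by (intro mult_left_mono) auto
    then have "36 * c \<le> 36 * sqrt c" by (simp add: real_le_rsqrt power2_eq_square)
    then show ?thesis using normal_ball_bound_power_floor_le_large_time[OF c 2(1) t 2(2)] by linarith
  next
    case 3
    have "1/36 \<le> sqrt c" using 3 by (intro real_le_rsqrt) (simp add: power2_eq_square)
    moreover have "normal_ball_bound a ^ nat \<lfloor>t\<rfloor> \<le> 1"
      using normal_ball_bound_nonneg[OF a] normal_ball_bound_le_one by (rule power_le_one)
    ultimately show ?thesis unfolding a_def by linarith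
  qed
qed

lemma abs_le_running_abs_max:
  assumes "continuous_on {0..t} (\<lambda>s. X s \<omega>)" and "s \<in> {0..t}"
  shows "\<bar>X s \<omega>\<bar> \<le> running_abs_max X t \<omega>"
proof -
  have "compact ((\<lambda>s. \<bar>X s \<omega>\<bar>) ` {0..t})"
    by (intro compact_continuous_image continuous_intros assms(1)) auto
  then have "bdd_above ((\<lambda>s. \<bar>X s \<omega>\<bar>) ` {0..t})"
    by (intro bounded_imp_bdd_above compact_imp_bounded)
  then show ?thesis unfolding running_abs_max_def using assms(2) by (rule cSUP_upper2) simp
qed

lemma integral_equation_increment_le:
  fixes x w :: "real \<Rightarrow> real"
  assumes cont: "continuous_on {0..v} x"
    and eq: "\<And>s. s \<in> {u, v} \<Longrightarrow> x s = - \<alpha> * integral {0..s} x + w s"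
    and uv: "0 \<le> u" "u \<le> v"
    and bound: "\<And>s. s \<in> {u..v} \<Longrightarrow> \<bar>x s\<bar> \<le> c"
  shows "\<bar>w v - w u\<bar> \<le> (2 + \<bar>\<alpha>\<bar> * (v - u)) * c"
proof -
  have "integral {0..u} x + integral {u..v} x = integral {0..v} x"
    using uv by (intro Henstock_Kurzweil_Integration.integral_combine integrable_continuous_interval cont)
  then have "\<alpha> * integral {0..v} x = \<alpha> * integral {0..u} x + \<alpha> * integral {u..v} x"
    by (metis distrib_left)
  then have "w v - w u = x v - x u + \<alpha> * integral {u..v} x"
    using eq[of u] eq[of v] by simp
  moreover have "\<bar>integral {u..v} x\<bar> \<le> c * (v - u)"
    using integral_bound[of u v x c] uv bound
    by (simp add: continuous_on_subset[OF cont])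
  then have "\<bar>\<alpha> * integral {u..v} x\<bar> \<le> \<bar>\<alpha>\<bar> * (c * (v - u))"
    by (simp add: abs_mult mult_left_mono)
  moreover have "\<bar>x v\<bar> \<le> c" "\<bar>x u\<bar> \<le> c" using bound uv by auto
  ultimately show ?thesis by (simp add: algebra_simps)
qed

lemma increment_le_running_abs_max:
  fixes X W :: "real \<Rightarrow> 'a \<Rightarrow> real"
  assumes cont: "continuous_on {0..} (\<lambda>s. X s \<omega>)"
    and eq: "\<forall>s\<ge>0. X s \<omega> = - \<alpha> * integral {0..s} (\<lambda>r. X r \<omega>) + W s \<omega>"
    and "0 \<le> u" "u \<le> v" "v \<le> t"
  shows "\<bar>W v \<omega> - W u \<omega>\<bar> \<le> (2 + \<bar>\<alpha>\<bar> * (v - u)) * running_abs_max X t \<omega>"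
proof (rule integral_equation_increment_le)
  show "continuous_on {0..v} (\<lambda>s. X s \<omega>)" by (rule continuous_on_subset[OF cont]) auto
  fix s assume "s \<in> {u..v}"
  then show "\<bar>X s \<omega>\<bar> \<le> running_abs_max X t \<omega>"
    using assms by (intro abs_le_running_abs_max continuous_on_subset[OF cont]) auto
qed (use assms in auto)

lemma prob_running_abs_max_less_le:
  fixes M :: "'a measure" and W X :: "real \<Rightarrow> 'a \<Rightarrow> real" and \<alpha> :: real
  assumes \<alpha>: "\<alpha> > 0"
    and BM: "brownian_motion M W"
    and cont: "\<forall>\<omega>\<in>space M. continuous_on {0..} (\<lambda>t. X t \<omega>)"
    and eq: "\<forall>\<omega>\<in>space M. \<forall>t\<ge>0.
           X t \<omega> = - \<alpha> * integral {0..t} (\<lambda>s. X s \<omega>) + W t \<omega>"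
    and t: "1 \<le> t" and \<delta>: "0 < \<delta>"
  shows "measure M {\<omega>\<in>space M. running_abs_max X t \<omega> < \<delta> * sqrt (ln t)}
           \<le> 36 * sqrt ((2 + \<alpha>) * \<delta>)"
proof -
  interpret prob_space M using BM unfolding brownian_motion_def by simp
  define a where "a = (2 + \<alpha>) * \<delta> * sqrt (ln t)"
  have a: "0 \<le> a" unfolding a_def using \<alpha> \<delta> t by simp
  define B where "B = {\<omega>\<in>space M. \<forall>k<nat \<lfloor>t\<rfloor>. \<bar>W (real k + 1) \<omega> - W (real k) \<omega>\<bar> \<le> a}"
  have "{\<omega>\<in>space M. running_abs_max X t \<omega> < \<delta> * sqrt (ln t)} \<subseteq> B"
  proof (safe, unfold B_def, intro CollectI conjI allI impI)
    fix \<omega> k assume \<omega>: "\<omega> \<in> space M" "running_abs_max X t \<omega> < \<delta> * sqrt (ln t)"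
      and k: "k < nat \<lfloor>t\<rfloor>"
    have "real k + 1 \<le> t" using k by linarith
    then have "\<bar>W (real k + 1) \<omega> - W (real k) \<omega>\<bar>
        \<le> (2 + \<bar>\<alpha>\<bar> * (real k + 1 - real k)) * running_abs_max X t \<omega>"
      using cont eq \<omega>(1) by (intro increment_le_running_abs_max) auto
    also have "\<dots> \<le> a"
      unfolding a_def using \<alpha> \<omega>(2) by (simp add: mult.assoc)
    finally show "\<bar>W (real k + 1) \<omega> - W (real k) \<omega>\<bar> \<le> a" .
  qed (simp add: B_def)
  moreover have "B \<in> sets M"
  proof -
    have [measurable]: "(\<lambda>\<omega>. W (real k + 1) \<omega> - W (real k) \<omega>) \<in> borel_measurable M" for k
      using distributed_measurable[OF brownian_motion_increment_distributed[OF BM]] by simp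
    show ?thesis unfolding B_def by measurable
  qed
  ultimately have "measure M {\<omega>\<in>space M. running_abs_max X t \<omega> < \<delta> * sqrt (ln t)} \<le> measure M B"
    by (rule finite_measure_mono)
  also have "\<dots> \<le> normal_ball_bound a ^ nat \<lfloor>t\<rfloor>"
    unfolding B_def by (rule prob_brownian_unit_increments_le[OF BM a])
  also have "\<dots> \<le> 36 * sqrt ((2 + \<alpha>) * \<delta>)"
    unfolding a_def using \<alpha> \<delta> t by (intro normal_ball_bound_power_floor_le) auto
  finally show ?thesis .
qed

theorem lemma3p1:
  fixes M :: "'a measure" and W X :: "real \<Rightarrow> 'a \<Rightarrow> real" and \<alpha> :: real
  assumes "\<alpha> > 0"
    and "brownian_motion M W"
    and "\<forall>\<omega>\<in>space M. continuous_on {0..} (\<lambda>t. X t \<omega>)"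
    and "\<forall>\<omega>\<in>space M. \<forall>t\<ge>0.
           X t \<omega> = - \<alpha> * integral {0..t} (\<lambda>s. X s \<omega>) + W t \<omega>"
  shows "\<exists>\<phi> :: real \<Rightarrow> real.
           (\<forall>\<delta>>0. \<phi> \<delta> \<ge> 0) \<and>
           (\<phi> \<longlongrightarrow> 0) (at_right 0) \<and>
           (\<forall>t\<ge>1. \<forall>\<delta>>0.
              measure M {\<omega>\<in>space M. running_abs_max X t \<omega> < \<delta> * sqrt (ln t)} \<le> \<phi> \<delta>)"
proof -
  define \<phi> where "\<phi> \<delta> = 36 * sqrt ((2 + \<alpha>) * \<delta>)" for \<delta>
  have "(\<phi> \<longlongrightarrow> \<phi> 0) (at 0)" unfolding \<phi>_def by (intro tendsto_intros)
  then have "(\<phi> \<longlongrightarrow> 0) (at_right 0)" by (simp add: \<phi>_def filterlim_at_split)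
  then show ?thesis
    using assms prob_running_abs_max_less_le[OF assms]
    by (intro exI[of _ \<phi>]) (auto simp: \<phi>_def)
qed

end
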